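(* Let $\omega>0$, $\bar r>0$, $\bar v>0$ and $T>0$ be such that $e^{AT}\begin{bmatrix}-\bar r\\ \bar v\end{bmatrix}=\begin{bmatrix}\bar r\\ \bar v\end{bmatrix}$, where $A=\begin{bmatrix}0&1\\ \omega^2&0\end{bmatrix}$, and let $B=\begin{bmatrix}0\\-\omega^2\end{bmatrix}$. Consider the hybrid system with state $(x,\tau)$, $x=(x_p,x_v)\in\mathbb R^2$, input $u\in\mathbb R$: flow: $\dot x=Ax+Bu$, $\dot\tau=1$, for $(x,\tau)\in\mathcal C\times[-T,2T]$; jump: $x^+=x+\begin{bmatrix}-2\bar r\\0\end{bmatrix}$, $\tau^+=\tau-T$, for $(x,\tau)\in\mathcal D\times[-T,2T]$, where $\mathcal C=[-\bar r,\bar r]\times\mathbb R$ and $\mathcal D=\{x\in\mathcal C: x_p=\bar r\}$. Let $x_r(\tau)=e^{A\tau}\begin{bmatrix}-\bar r\\ \bar v\end{bmatrix}$ and define the tracking error $\varepsilon=(\varepsilon_p,\varepsilon_v)=x-x_r(\tau)$. Then along solutions the tracking error evolves according to the hybrid dynamics $$\dot\varepsilon=A\varepsilon+Bu \ \text{(during flows)},\qquad \varepsilon^+=\varepsilon+\bar r\begin{bmatrix}\eta(\varepsilon_p)+\frac1{\eta(\varepsilon_p)}-2\\[2pt] \omega\Big(\frac1{\eta(\varepsilon_p)}-\eta(\varepsilon_p)\Big)\end{bmatrix}\ \text{(at jumps)},$$ where $\eta(\varepsilon_p):=\dfrac{\varepsilon_p-\bar r+\sqrt{\varepsilon_p^2-2\bar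 r\varepsilon_p+(\bar v/\omega)^2}}{\bar v/\omega-\bar r}$.
   Context: Solutions of the hybrid system are understood in the standard hybrid-time-domain sense (Goebel–Sanfelice–Teel). It is known (under the stated periodicity condition) that $\bar v/\omega-\bar r>0$, so $\eta$ is well defined and positive. *)

theory Defs
  imports "HOL-Analysis.Analysis"
begin

primrec mat_pow :: "real^'n^'n \<Rightarrow> nat \<Rightarrow> real^'n^'n" where
  "mat_pow M 0 = mat 1"
| "mat_pow M (Suc k) = M ** mat_pow M k"

definition mexp :: "real^'n^'n \<Rightarrow> real^'n^'n" where
  "mexp M = (\<Sum>k. (1 / fact k) *\<^sub>R mat_pow M k)"

definition Amat :: "real \<Rightarrow> real^2^2" where
  "Amat \<omega> = vector [vector [0, 1], vector [\<omega>\<^sup>2, 0]]"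

definition Bvec :: "real \<Rightarrow> real^2" where
  "Bvec \<omega> = vector [0, - (\<omega>\<^sup>2)]"

definition flow_set :: "real \<Rightarrow> (real^2) set" where
  "flow_set rbar = {x. - rbar \<le> x$1 \<and> x$1 \<le> rbar}"

definition jump_set :: "real \<Rightarrow> (real^2) set" where
  "jump_set rbar = {x \<in> flow_set rbar. x$1 = rbar}"

definition jump_x :: "real \<Rightarrow> real^2 \<Rightarrow> real^2" where
  "jump_x rbar x = x + vector [- 2 * rbar, 0]"

definition x_ref :: "real \<Rightarrow> real \<Rightarrow> real \<Rightarrow> real \<Rightarrow> real^2" where
  "x_ref \<omega> rbar vbar \<tau> = mexp (\<tau> *\<^sub>R Amat \<omega>) *v vector [- rbar, vbar]"

definition eta :: "real \<Rightarrow> real \<Rightarrow> real \<Rightarrow> real \<Rightarrow> real" where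
  "eta \<omega> rbar vbar ep =
     (ep - rbar + sqrt (ep\<^sup>2 - 2 * rbar * ep + (vbar / \<omega>)\<^sup>2)) / (vbar / \<omega> - rbar)"

end

theory Submission
  imports Defs
begin

(* Since A\<^sup>2 = \<omega>\<^sup>2 I, exp(\<tau> A) = cosh(\<omega>\<tau>) I + sinh(\<omega>\<tau>)/\<omega> A. With a = vbar/\<omega> and
   E = exp(\<omega>T), the periodicity condition says a + rbar = E (a - rbar); since rbar, T > 0 this forces
   a > rbar, and it turns the reference into the phase form
   x_r(\<tau>) = (a - rbar)/2 (z - w, \<omega> (z + w)) with z = exp(\<omega>\<tau>), w = exp(\<omega>(T - \<tau>)), z w = E.
   At a jump x_p = rbar, so \<epsilon>_p = rbar - (a - rbar)/2 (z - w); the radicand in \<eta> is then the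
   perfect square ((a - rbar)/2 (z + w))\<^sup>2 and \<eta>(\<epsilon>_p) = w. The jump of \<epsilon> is the jump of x
   plus x_r(\<tau>) - x_r(\<tau> - T), which the phase form evaluates to rbar (w + 1/w, \<omega> (1/w - w)). *)

lemma mat_pow_scaleR_of_square_eq:
  fixes M :: "real^'n^'n"
  assumes square: "M ** M = \<omega>\<^sup>2 *\<^sub>R mat 1" and "\<omega> \<noteq> 0"
  shows "mat_pow (\<tau> *\<^sub>R M) k =
    (if even k then (\<omega> * \<tau>) ^ k else 0) *\<^sub>R mat 1
    + (if even k then 0 else (\<omega> * \<tau>) ^ k / \<omega>) *\<^sub>R M"
proof (induction k)
  case 0
  show ?case by simp
next
  case (Suc k)
  have "mat_pow (\<tau> *\<^sub>R M) (Suc k) = (\<tau> *\<^sub>R M) ** mat_pow (\<tau> *\<^sub>R M) k"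
    by simp
  also have "\<dots> = (if even k then \<tau> * (\<omega> * \<tau>) ^ k else 0) *\<^sub>R M
      + (if even k then 0 else \<tau> * (\<omega> * \<tau>) ^ k / \<omega>) *\<^sub>R (M ** M)"
    unfolding Suc.IH matrix_add_ldistrib matrix_scalar_ac scalar_matrix_assoc[symmetric]
    by simp
  also have "\<dots> = (if even (Suc k) then (\<omega> * \<tau>) ^ Suc k else 0) *\<^sub>R mat 1
      + (if even (Suc k) then 0 else (\<omega> * \<tau>) ^ Suc k / \<omega>) *\<^sub>R M"
    using \<open>\<omega> \<noteq> 0\<close> by (simp add: square power2_eq_square field_simps)
  finally show ?case .
qed

lemma mexp_scaleR_of_square_eq:
  fixes M :: "real^'n^'n"
  assumes "M ** M = \<omega>\<^sup>2 *\<^sub>R mat 1" and "\<omega> \<noteq> 0"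
  shows "mexp (\<tau> *\<^sub>R M) = cosh (\<omega> * \<tau>) *\<^sub>R mat 1 + (sinh (\<omega> * \<tau>) / \<omega>) *\<^sub>R M"
proof -
  have "(\<lambda>k. (1 / fact k) *\<^sub>R mat_pow (\<tau> *\<^sub>R M) k) =
    (\<lambda>k. (if even k then (\<omega> * \<tau>) ^ k /\<^sub>R fact k else 0) *\<^sub>R mat 1
       + ((if even k then 0 else (\<omega> * \<tau>) ^ k /\<^sub>R fact k) / \<omega>) *\<^sub>R M)"
    by (simp add: mat_pow_scaleR_of_square_eq[OF assms] fun_eq_iff field_simps)
  moreover have "\<dots> sums (cosh (\<omega> * \<tau>) *\<^sub>R mat 1 + (sinh (\<omega> * \<tau>) / \<omega>) *\<^sub>R M)"
    by (intro sums_add sums_scaleR_left sums_divide cosh_converges sinh_converges)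
  ultimately show ?thesis
    unfolding mexp_def by (simp add: sums_iff)
qed

lemma has_vector_derivative_mexp_of_square_eq:
  fixes M :: "real^'n^'n"
  assumes square: "M ** M = \<omega>\<^sup>2 *\<^sub>R mat 1" and "\<omega> \<noteq> 0"
  shows "((\<lambda>s. mexp (s *\<^sub>R M) *v p) has_vector_derivative M *v (mexp (\<tau> *\<^sub>R M) *v p)) (at \<tau>)"
proof -
  have mexp_apply: "mexp (s *\<^sub>R M) *v p = cosh (\<omega> * s) *\<^sub>R p + (sinh (\<omega> * s) / \<omega>) *\<^sub>R (M *v p)"
    for s
    by (simp add: mexp_scaleR_of_square_eq[OF assms] matrix_vector_mult_add_rdistrib
        scaleR_matrix_vector_assoc[symmetric])
  have "M *v (mexp (\<tau> *\<^sub>R M) *v p) = (\<omega> * sinh (\<omega> * \<tau>)) *\<^sub>R p + cosh (\<omega> * \<tau>) *\<^sub>R (M *v p)"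
    using \<open>\<omega> \<noteq> 0\<close>
    by (simp add: mexp_apply algebra_simps matrix_vector_mul_assoc square power2_eq_square
        scaleR_matrix_vector_assoc[symmetric])
  then show ?thesis
    unfolding mexp_apply using \<open>\<omega> \<noteq> 0\<close>
    by (auto intro!: derivative_eq_intros)
qed

lemma Amat_square: "Amat \<omega> ** Amat \<omega> = \<omega>\<^sup>2 *\<^sub>R mat 1"
  by (simp add: Amat_def vec_eq_iff forall_2 matrix_matrix_mult_def sum_2 mat_def)

lemma x_ref_has_vector_derivative:
  assumes "\<omega> \<noteq> 0"
  shows "(x_ref \<omega> r v has_vector_derivative Amat \<omega> *v x_ref \<omega> r v \<tau>) (at \<tau>)"
  unfolding x_ref_def[abs_def]
  by (rule has_vector_derivative_mexp_of_square_eq[OF Amat_square assms])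

lemma x_ref_eq:
  assumes "\<omega> \<noteq> 0"
  shows "x_ref \<omega> r v \<tau> = vector [v / \<omega> * sinh (\<omega> * \<tau>) - r * cosh (\<omega> * \<tau>),
                               v * cosh (\<omega> * \<tau>) - \<omega> * r * sinh (\<omega> * \<tau>)]"
  using assms unfolding x_ref_def mexp_scaleR_of_square_eq[OF Amat_square assms]
  by (simp add: Amat_def vec_eq_iff forall_2 matrix_vector_mult_def sum_2 mat_def power2_eq_square)

lemma x_ref_period_condition:
  assumes "\<omega> \<noteq> 0" and "x_ref \<omega> r v T = vector [r, v]"
  shows "v / \<omega> + r = exp (\<omega> * T) * (v / \<omega> - r)"
proof -
  define E where "E = exp (\<omega> * T)"
  define a where "a = v / \<omega>"
  have "E > 0" by (simp add: E_def)
  have sinh_eq: "sinh (\<omega> * T) = (E - 1 / E) / 2" and cosh_eq: "cosh (\<omega> * T) = (E + 1 / E) / 2"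
    by (simp_all add: sinh_def cosh_def exp_minus E_def field_simps)
  have "a * sinh (\<omega> * T) - r * cosh (\<omega> * T) = r"
    using arg_cong[OF assms(2), of "\<lambda>y. y $ 1"] by (simp add: x_ref_eq[OF assms(1)] a_def)
  moreover have "2 * E * (a * sinh (\<omega> * T) - r * cosh (\<omega> * T)) = a * (E * E - 1) - r * (E * E + 1)"
    unfolding sinh_eq cosh_eq using \<open>E > 0\<close> by (simp add: field_simps)
  ultimately have "a * (E * E - 1) - r * (E * E + 1) = 2 * r * E"
    by (simp add: mult_ac)
  then have "(E + 1) * (a + r) = (E + 1) * (E * (a - r))"
    by (simp add: algebra_simps)
  then have "a + r = E * (a - r)"
    using \<open>E > 0\<close> by simp
  then show ?thesis
    by (simp add: E_def a_def)
qed

lemma x_ref_phase_form: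
  assumes "\<omega> \<noteq> 0" and period: "v / \<omega> + r = exp (\<omega> * T) * (v / \<omega> - r)"
  shows "x_ref \<omega> r v \<tau> = ((v / \<omega> - r) / 2) *\<^sub>R
    vector [exp (\<omega> * \<tau>) - exp (\<omega> * (T - \<tau>)), \<omega> * (exp (\<omega> * \<tau>) + exp (\<omega> * (T - \<tau>)))]"
proof -
  define a where "a = v / \<omega>"
  define E where "E = exp (\<omega> * T)"
  define z where "z = exp (\<omega> * \<tau>)"
  have "z > 0" by (simp add: z_def)
  have v_eq: "v = \<omega> * a" using assms(1) by (simp add: a_def)
  have sinh_eq: "sinh (\<omega> * \<tau>) = (z - 1 / z) / 2" and cosh_eq: "cosh (\<omega> * \<tau>) = (z + 1 / z) / 2"
    and exp_eq: "exp (\<omega> * (T - \<tau>)) = E / z"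
    by (simp_all add: sinh_def cosh_def exp_minus z_def E_def right_diff_distrib exp_diff field_simps)
  have "a * sinh (\<omega> * \<tau>) - r * cosh (\<omega> * \<tau>) = ((a - r) * z - (a + r) / z) / 2"
    and "a * cosh (\<omega> * \<tau>) - r * sinh (\<omega> * \<tau>) = ((a - r) * z + (a + r) / z) / 2"
    unfolding sinh_eq cosh_eq using \<open>z > 0\<close> by (simp_all add: field_simps)
  moreover have "a + r = E * (a - r)"
    using period by (simp add: a_def E_def)
  ultimately have position: "a * sinh (\<omega> * \<tau>) - r * cosh (\<omega> * \<tau>) = (a - r) / 2 * (z - E / z)"
    and velocity: "a * cosh (\<omega> * \<tau>) - r * sinh (\<omega> * \<tau>) = (a - r) / 2 * (z + E / z)"
    by (simp_all add: field_simps)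
  have "v * cosh (\<omega> * \<tau>) - \<omega> * r * sinh (\<omega> * \<tau>) = \<omega> * (a * cosh (\<omega> * \<tau>) - r * sinh (\<omega> * \<tau>))"
    by (simp add: v_eq algebra_simps)
  then show ?thesis
    unfolding x_ref_eq[OF assms(1)] a_def[symmetric] position velocity exp_eq z_def[symmetric]
    by (simp add: vec_eq_iff forall_2)
qed

lemma x_ref_diff_period_shift:
  fixes \<omega> r v T \<tau> :: real
  assumes "\<omega> \<noteq> 0" and period: "v / \<omega> + r = exp (\<omega> * T) * (v / \<omega> - r)"
  defines "w \<equiv> exp (\<omega> * (T - \<tau>))"
  shows "x_ref \<omega> r v \<tau> - x_ref \<omega> r v (\<tau> - T) = r *\<^sub>R vector [w + 1 / w, \<omega> * (1 / w - w)]"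
proof -
  define E where "E = exp (\<omega> * T)"
  define \<kappa> where "\<kappa> = (v / \<omega> - r) / 2"
  have "w > 0" by (simp add: w_def)
  have r_eq: "r = \<kappa> * (E - 1)"
    using period by (simp add: \<kappa>_def E_def algebra_simps)
  have "exp (\<omega> * \<tau>) = E / w" and "exp (\<omega> * (\<tau> - T)) = 1 / w"
    and "exp (\<omega> * (T - (\<tau> - T))) = E * w"
    unfolding w_def E_def exp_diff[symmetric] exp_add[symmetric] inverse_eq_divide[symmetric]
      exp_minus[symmetric]
    by (simp_all add: algebra_simps)
  then show ?thesis
    unfolding x_ref_phase_form[OF assms(1) period] \<kappa>_def[symmetric] w_def[symmetric]
    using \<open>w > 0\<close> by (simp add: vec_eq_iff forall_2 r_eq field_simps)
qed

lemma eta_of_phase_form: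
  assumes "v / \<omega> - r > 0" and "z > 0" and "w > 0" and "(v / \<omega> - r) * (z * w) = v / \<omega> + r"
  shows "eta \<omega> r v (r - (v / \<omega> - r) / 2 * (z - w)) = w"
proof -
  define a where "a = v / \<omega>"
  define \<kappa> where "\<kappa> = (a - r) / 2"
  have "\<kappa> > 0" using assms(1) by (simp add: \<kappa>_def a_def)
  have "a\<^sup>2 - r\<^sup>2 = (a - r) * (a + r)"
    by (simp add: power2_eq_square algebra_simps)
  also have "\<dots> = (a - r) * ((a - r) * (z * w))"
    using assms(4) by (simp add: a_def)
  also have "\<dots> = 4 * \<kappa>\<^sup>2 * (z * w)"
    by (simp add: \<kappa>_def power2_eq_square)
  finally have "a\<^sup>2 - r\<^sup>2 = 4 * \<kappa>\<^sup>2 * (z * w)" .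
  then have "(r - \<kappa> * (z - w))\<^sup>2 - 2 * r * (r - \<kappa> * (z - w)) + a\<^sup>2 = (\<kappa> * (z + w))\<^sup>2"
    by (simp add: power2_eq_square algebra_simps)
  moreover have "\<kappa> * (z + w) > 0"
    using \<open>\<kappa> > 0\<close> assms(2,3) by simp
  ultimately have "sqrt ((r - \<kappa> * (z - w))\<^sup>2 - 2 * r * (r - \<kappa> * (z - w)) + a\<^sup>2) = \<kappa> * (z + w)"
    by simp
  then show ?thesis
    unfolding eta_def a_def[symmetric] \<kappa>_def[symmetric]
    using \<open>\<kappa> > 0\<close> by (simp add: \<kappa>_def field_simps)
qed

lemma tracking_error_has_vector_derivative:
  fixes M :: "real^'n^'n" and x x\<^sub>r :: "real \<Rightarrow> real^'n"
  assumes "(x has_vector_derivative M *v x t + b) (at t within S)"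
    and "(\<tau> has_real_derivative 1) (at t within S)"
    and "(x\<^sub>r has_vector_derivative M *v x\<^sub>r (\<tau> t)) (at (\<tau> t))"
  shows "((\<lambda>s. x s - x\<^sub>r (\<tau> s)) has_vector_derivative M *v (x t - x\<^sub>r (\<tau> t)) + b) (at t within S)"
proof -
  have "(\<tau> has_vector_derivative 1) (at t within S)"
    using assms(2) by (simp add: has_real_derivative_iff_has_vector_derivative)
  then have "((x\<^sub>r \<circ> \<tau>) has_vector_derivative 1 *\<^sub>R (M *v x\<^sub>r (\<tau> t))) (at t within S)"
    by (rule vector_diff_chain_within) (use assms(3) has_vector_derivative_at_within in blast)
  from has_vector_derivative_diff[OF assms(1) this] show ?thesis
    by (simp add: o_def algebra_simps)
qed

lemma tracking_error_jump:
  fixes \<omega> r v T \<tau> :: real and x :: "real^2"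
  assumes "\<omega> > 0" and "r > 0" and "T > 0" and "x_ref \<omega> r v T = vector [r, v]" and "x $ 1 = r"
  defines "\<epsilon> \<equiv> x - x_ref \<omega> r v \<tau>"
  defines "e \<equiv> eta \<omega> r v (\<epsilon> $ 1)"
  shows "jump_x r x - x_ref \<omega> r v (\<tau> - T) = \<epsilon> + r *\<^sub>R vector [e + 1 / e - 2, \<omega> * (1 / e - e)]"
proof -
  define E where "E = exp (\<omega> * T)"
  define z where "z = exp (\<omega> * \<tau>)"
  define w where "w = exp (\<omega> * (T - \<tau>))"
  have "\<omega> \<noteq> 0" using assms(1) by simp
  have period: "v / \<omega> + r = E * (v / \<omega> - r)"
    unfolding E_def by (rule x_ref_period_condition[OF \<open>\<omega> \<noteq> 0\<close> assms(4)])
  have "E > 1" using assms(1,3) by (simp add: E_def)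
  have "(v / \<omega> - r) * (E - 1) = 2 * r"
    using period \<open>\<omega> \<noteq> 0\<close> by (simp add: field_simps)
  then have "(v / \<omega> - r) * (E - 1) > 0"
    using assms(2) by simp
  then have "v / \<omega> - r > 0"
    using \<open>E > 1\<close> by (simp add: zero_less_mult_iff)
  have "z * w = E"
    unfolding z_def w_def E_def exp_add[symmetric] by (simp add: algebra_simps)
  have "\<epsilon> $ 1 = r - (v / \<omega> - r) / 2 * (z - w)"
    unfolding \<epsilon>_def x_ref_phase_form[OF \<open>\<omega> \<noteq> 0\<close> period[unfolded E_def]] z_def w_def
    using assms(5) by simp
  then have "e = eta \<omega> r v (r - (v / \<omega> - r) / 2 * (z - w))"
    by (simp add: e_def)
  also have "\<dots> = w"
    by (rule eta_of_phase_form) (use \<open>v / \<omega> - r > 0\<close> period \<open>z * w = E\<close> in \<open>simp_all add: z_def w_def\<close>)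
  finally show ?thesis
    unfolding \<epsilon>_def jump_x_def w_def
    using x_ref_diff_period_shift[OF \<open>\<omega> \<noteq> 0\<close> period[unfolded E_def], of \<tau>]
    by (simp add: vec_eq_iff forall_2 algebra_simps)
qed

theorem lemma1:
  fixes \<omega> rbar vbar T :: real
  assumes "\<omega> > 0" and "rbar > 0" and "vbar > 0" and "T > 0"
    and "mexp (T *\<^sub>R Amat \<omega>) *v vector [- rbar, vbar] = vector [rbar, vbar]"
  shows
    "(\<forall>(x :: real \<Rightarrow> real^2) (\<tau> :: real \<Rightarrow> real) (u :: real \<Rightarrow> real) (t :: real) (S :: real set).
        x t \<in> flow_set rbar \<and> \<tau> t \<in> {- T..2 * T} \<and>
        (x has_vector_derivative (Amat \<omega> *v x t + u t *\<^sub>R Bvec \<omega>)) (at t within S) \<and>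
        (\<tau> has_real_derivative 1) (at t within S)
        \<longrightarrow> ((\<lambda>s. x s - x_ref \<omega> rbar vbar (\<tau> s)) has_vector_derivative
               (Amat \<omega> *v (x t - x_ref \<omega> rbar vbar (\<tau> t)) + u t *\<^sub>R Bvec \<omega>)) (at t within S))
     \<and>
     (\<forall>(x :: real^2) (\<tau> :: real).
        x \<in> jump_set rbar \<and> \<tau> \<in> {- T..2 * T} \<longrightarrow>
        (let \<epsilon> = x - x_ref \<omega> rbar vbar \<tau>;
             \<epsilon>' = jump_x rbar x - x_ref \<omega> rbar vbar (\<tau> - T);
             e = eta \<omega> rbar vbar (\<epsilon>$1)
         in \<epsilon>' = \<epsilon> + rbar *\<^sub>R vector [e + 1 / e - 2, \<omega> * (1 / e - e)]))"
proof (intro conjI allI impI)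
  fix x :: "real \<Rightarrow> real^2" and \<tau> :: "real \<Rightarrow> real" and u :: "real \<Rightarrow> real" and t :: real and S
  assume "x t \<in> flow_set rbar \<and> \<tau> t \<in> {- T..2 * T} \<and>
    (x has_vector_derivative Amat \<omega> *v x t + u t *\<^sub>R Bvec \<omega>) (at t within S) \<and>
    (\<tau> has_real_derivative 1) (at t within S)"
  then show "((\<lambda>s. x s - x_ref \<omega> rbar vbar (\<tau> s)) has_vector_derivative
      Amat \<omega> *v (x t - x_ref \<omega> rbar vbar (\<tau> t)) + u t *\<^sub>R Bvec \<omega>) (at t within S)"
    using \<open>\<omega> > 0\<close> by (intro tracking_error_has_vector_derivative x_ref_has_vector_derivative) auto
next
  fix x :: "real^2" and \<tau> :: real
  assume "x \<in> jump_set rbar \<and> \<tau> \<in> {- T..2 * T}"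
  then have "x $ 1 = rbar" by (simp add: jump_set_def)
  then show "let \<epsilon> = x - x_ref \<omega> rbar vbar \<tau>;
      \<epsilon>' = jump_x rbar x - x_ref \<omega> rbar vbar (\<tau> - T);
      e = eta \<omega> rbar vbar (\<epsilon>$1)
    in \<epsilon>' = \<epsilon> + rbar *\<^sub>R vector [e + 1 / e - 2, \<omega> * (1 / e - e)]"
    unfolding Let_def using assms(1,2,4) assms(5)[folded x_ref_def]
    by (intro tracking_error_jump)
qed

end
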